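(* Let $G$ be an infinite group and $A\subseteq G$. Then: (i) for $n\in\mathbb{N}$, $A$ is $n$-thin if and only if $|Y|\le n$ for every $Y\in W(A)$; (ii) $A$ is sparse if and only if every $Y\in W(A)$ is finite; (iii) $A$ is scattered if and only if for every subset $B\subseteq A$ there exists a finite subset $Y$ of $G$ lying in the closure (in $\mathcal{P}_G$) of $\{Bb^{-1}: b\in B\}$.
   Context: Identify $\mathcal{P}_G$ with $\{0,1\}^G$ with the product topology, a $G$-space under $(A,g)\mapsto Ag$. For $X\in\mathcal{P}_G$: $[U]_X=\{g: Xg\in U\}$, $T(X)$ is the closure of $\{Xg:g\in G\}$, and $W(X)=\{Y\in T(X): [U]_X$ infinite for every neighbourhood $U$ of $Y\}$. $A$ is $n$-thin if for all distinct $g_0,\dots,g_n\in G$ the set $g_0A\cap\dots\cap g_nA$ is finite. $A$ is sparse if for every infinite $X\subseteq G$ there is finite $F\subseteq X$ with $\bigcap_{g\in F}gA$ finite. Identify $\beta G$ with the set of ultrafilters on $G$ with its usual semigroup extension of the multiplication ($gp=\{gP:P\in p\}$); $G^*$ is the set of free ultrafilters and for $X\subseteq G$, $X^*=\{p\in G^*: X\in p\}$. For $p\in G^*$, $\Delta_p(X)=X^*\cap Gp=\{gp: g\in G, X\in gp\}$. $A$ is scattered if for every infinite $X\subseteq A$ there is $p\in X^*$ with $\Delta_p(X)$ finite. *)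

theory Defs
  imports "HOL-Analysis.Analysis" "HOL-Algebra.Algebra"
begin

text \<open>A subset S of G is identified
  with its characteristic function chi G S.\<close>

definition PG :: "('a, 'b) monoid_scheme \<Rightarrow> ('a \<Rightarrow> bool) topology" where
  "PG G = product_topology (\<lambda>i. discrete_topology (UNIV :: bool set)) (carrier G)"

definition chi :: "('a, 'b) monoid_scheme \<Rightarrow> 'a set \<Rightarrow> ('a \<Rightarrow> bool)" where
  "chi G S = restrict (\<lambda>x. x \<in> S) (carrier G)"

text \<open>[U]_X = {g. Xg \<in> U}, the action being right translation S g = S #> g.\<close>
definition hits :: "('a, 'b) monoid_scheme \<Rightarrow> ('a \<Rightarrow> bool) set \<Rightarrow> 'a set \<Rightarrow> 'a set" where
  "hits G U S = {g \<in> carrier G. chi G (S #>\<^bsub>G\<^esub> g) \<in> U}"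

definition Torb :: "('a, 'b) monoid_scheme \<Rightarrow> 'a set \<Rightarrow> 'a set set" where
  "Torb G S = {Y. Y \<subseteq> carrier G \<and>
     chi G Y \<in> (PG G) closure_of (chi G ` {S #>\<^bsub>G\<^esub> g | g. g \<in> carrier G})}"

definition Wset :: "('a, 'b) monoid_scheme \<Rightarrow> 'a set \<Rightarrow> 'a set set" where
  "Wset G S = {Y \<in> Torb G S. \<forall>U. (\<exists>V. openin (PG G) V \<and> chi G Y \<in> V \<and> V \<subseteq> U)
                 \<longrightarrow> infinite (hits G U S)}"

definition n_thin :: "('a, 'b) monoid_scheme \<Rightarrow> nat \<Rightarrow> 'a set \<Rightarrow> bool" where
  "n_thin G n A \<longleftrightarrow> (\<forall>F. F \<subseteq> carrier G \<and> card F = Suc n \<longrightarrow>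
        finite (\<Inter>g\<in>F. g <#\<^bsub>G\<^esub> A))"

definition sparse :: "('a, 'b) monoid_scheme \<Rightarrow> 'a set \<Rightarrow> bool" where
  "sparse G A \<longleftrightarrow> (\<forall>S. S \<subseteq> carrier G \<and> infinite S \<longrightarrow>
        (\<exists>F. F \<subseteq> S \<and> finite F \<and> finite (carrier G \<inter> (\<Inter>g\<in>F. g <#\<^bsub>G\<^esub> A))))"

definition ultrafilter_on :: "('a, 'b) monoid_scheme \<Rightarrow> 'a set set \<Rightarrow> bool" where
  "ultrafilter_on G p \<longleftrightarrow> p \<subseteq> Pow (carrier G) \<and> carrier G \<in> p \<and> {} \<notin> p \<and>
     (\<forall>P\<in>p. \<forall>Q\<in>p. P \<inter> Q \<in> p) \<and>
     (\<forall>P\<in>p. \<forall>Q. P \<subseteq> Q \<and> Q \<subseteq> carrier G \<longrightarrow> Q \<in> p) \<and>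
     (\<forall>P. P \<subseteq> carrier G \<longrightarrow> P \<in> p \<or> carrier G - P \<in> p)"

definition free_ultrafilter_on :: "('a, 'b) monoid_scheme \<Rightarrow> 'a set set \<Rightarrow> bool" where
  "free_ultrafilter_on G p \<longleftrightarrow> ultrafilter_on G p \<and> (\<forall>P\<in>p. infinite P)"

definition uf_lmult :: "('a, 'b) monoid_scheme \<Rightarrow> 'a \<Rightarrow> 'a set set \<Rightarrow> 'a set set" where
  "uf_lmult G g p = (\<lambda>P. g <#\<^bsub>G\<^esub> P) ` p"

definition Delta :: "('a, 'b) monoid_scheme \<Rightarrow> 'a set set \<Rightarrow> 'a set \<Rightarrow> 'a set set set" where
  "Delta G p S = {uf_lmult G g p | g. g \<in> carrier G \<and> S \<in> uf_lmult G g p}"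

definition scattered :: "('a, 'b) monoid_scheme \<Rightarrow> 'a set \<Rightarrow> bool" where
  "scattered G A \<longleftrightarrow> (\<forall>S. S \<subseteq> A \<and> infinite S \<longrightarrow>
        (\<exists>p. free_ultrafilter_on G p \<and> S \<in> p \<and> finite (Delta G p S)))"

end

theory Submission
  imports Defs
begin

text \<open>
  A subset Y lies in W(A) iff for every finite K \<subseteq> G infinitely many translates A g agree with Y
  on K, and every limit p-lim A g along a free ultrafilter p lies in W(A). Since x \<in> A g iff
  g\<inverse> \<in> x\<inverse> A, a set F\<inverse> fits inside a member of W(A) iff the intersection of the x A, x \<in> F',
  is infinite for every finite F' \<subseteq> F; for F of size n + 1 this is the failure of n-thinness,
  for infinite F the failure of sparseness.

  For scatteredness, the limit Y = p-lim B b\<inverse> satisfies x \<in> Y iff B \<in> x p, and x \<mapsto> x p is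
  injective because no ultrafilter is fixed by a nontrivial translation g (cover G by three sets Z
  with g Z \<inter> Z = \<emptyset>). Hence \<Delta>_p(B) = Y p is finite iff Y is. Conversely, a finite Y in the
  closure of {B b\<inverse>} is approximated on each finite K by infinitely many b \<in> B, which yields a free
  ultrafilter p \<ni> B with p-lim B b\<inverse> = Y.
\<close>

section \<open>Translates and inverses\<close>

lemma (in group) r_coset_mem_iff:
  assumes "S \<subseteq> carrier G" "g \<in> carrier G" "x \<in> carrier G"
  shows "x \<in> S #> g \<longleftrightarrow> x \<otimes> inv g \<in> S"
proof
  assume "x \<in> S #> g"
  then obtain s where "s \<in> S" "x = s \<otimes> g" by (auto simp: r_coset_def)
  then show "x \<otimes> inv g \<in> S" using assms by (simp add: m_assoc subsetD)
next
  assume "x \<otimes> inv g \<in> S"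
  moreover have "x = (x \<otimes> inv g) \<otimes> g" using assms by (simp add: m_assoc)
  ultimately show "x \<in> S #> g" unfolding r_coset_def by blast
qed

lemma (in group) l_coset_mem_iff:
  assumes "S \<subseteq> carrier G" "g \<in> carrier G" "x \<in> carrier G"
  shows "x \<in> g <# S \<longleftrightarrow> inv g \<otimes> x \<in> S"
proof
  assume "x \<in> g <# S"
  then obtain s where "s \<in> S" "x = g \<otimes> s" by (auto simp: l_coset_def)
  then show "inv g \<otimes> x \<in> S" using assms by (simp add: m_assoc[symmetric] subsetD)
next
  assume "inv g \<otimes> x \<in> S"
  moreover have "x = g \<otimes> (inv g \<otimes> x)" using assms by (simp add: m_assoc[symmetric])
  ultimately show "x \<in> g <# S" unfolding l_coset_def by blast
qed

lemma (in group) inv_mem_r_coset_iff: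
  assumes "A \<subseteq> carrier G" "f \<in> carrier G" "g \<in> carrier G"
  shows "inv f \<in> A #> g \<longleftrightarrow> inv g \<in> f <# A"
  using assms by (simp add: r_coset_mem_iff l_coset_mem_iff)

lemma (in group) inj_on_inv: "inj_on (m_inv G) (carrier G)"
  by (rule inj_onI) (metis inv_inv)

lemma (in group) finite_inv_image_iff:
  "F \<subseteq> carrier G \<Longrightarrow> finite (m_inv G ` F) \<longleftrightarrow> finite F"
  using finite_image_iff inj_on_inv inj_on_subset by blast

lemma (in group) card_inv_image:
  "F \<subseteq> carrier G \<Longrightarrow> card (m_inv G ` F) = card F"
  using card_image inj_on_inv inj_on_subset by blast

lemma (in group) inv_image_inv_image:
  "F \<subseteq> carrier G \<Longrightarrow> m_inv G ` m_inv G ` F = F"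
  by (force simp: image_image subset_iff)

section \<open>Basic neighbourhoods in \<open>P_G\<close>\<close>

definition agrees_on :: "'a set \<Rightarrow> 'a set \<Rightarrow> 'a set \<Rightarrow> bool" where
  "agrees_on K S T \<longleftrightarrow> (\<forall>k\<in>K. k \<in> S \<longleftrightarrow> k \<in> T)"

definition cylinder :: "('a, 'b) monoid_scheme \<Rightarrow> ('a \<Rightarrow> bool) \<Rightarrow> 'a set \<Rightarrow> ('a \<Rightarrow> bool) set" where
  "cylinder G y K = {z \<in> topspace (PG G). \<forall>k\<in>K. z k = y k}"

lemma topspace_PG: "topspace (PG G) = (\<Pi>\<^sub>E i\<in>carrier G. UNIV)"
  by (simp add: PG_def)

lemma chi_in_topspace: "chi G Y \<in> topspace (PG G)"
  by (simp add: topspace_PG chi_def)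

lemma chi_in_cylinder_iff:
  "K \<subseteq> carrier G \<Longrightarrow> chi G Z \<in> cylinder G (chi G Y) K \<longleftrightarrow> agrees_on K Z Y"
  using chi_in_topspace[of G Z] by (auto simp: cylinder_def agrees_on_def chi_def subsetD)

lemma chi_in_own_cylinder: "chi G Y \<in> cylinder G (chi G Y) K"
  by (simp add: cylinder_def chi_in_topspace)

lemma openin_cylinder:
  assumes "finite K" "K \<subseteq> carrier G"
  shows "openin (PG G) (cylinder G y K)"
proof -
  have "cylinder G y K = (\<Pi>\<^sub>E i\<in>carrier G. if i \<in> K then {y i} else UNIV)"
  proof (intro Set.set_eqI iffI)
    fix z assume "z \<in> (\<Pi>\<^sub>E i\<in>carrier G. if i \<in> K then {y i} else UNIV)"
    moreover have "z k = y k" if "k \<in> K" "z \<in> (\<Pi>\<^sub>E i\<in>carrier G. if i \<in> K then {y i} else UNIV)" for k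
      using that assms(2) by (force simp: PiE_iff)
    ultimately show "z \<in> cylinder G y K" by (auto simp: cylinder_def topspace_PG PiE_iff)
  qed (auto simp: cylinder_def topspace_PG PiE_iff)
  moreover have "finite {i \<in> carrier G. (if i \<in> K then {y i} else UNIV) \<noteq> (UNIV :: bool set)}"
    by (rule finite_subset[OF _ assms(1)]) auto
  ultimately show ?thesis
    unfolding PG_def by (simp add: openin_PiE_gen)
qed

lemma cylinder_neighbourhood_base:
  assumes "openin (PG G) V" "y \<in> V"
  obtains K where "finite K" "K \<subseteq> carrier G" "cylinder G y K \<subseteq> V"
proof -
  obtain U where U: "y \<in> (\<Pi>\<^sub>E i\<in>carrier G. U i)" "finite {i. U i \<noteq> UNIV}"
    "(\<Pi>\<^sub>E i\<in>carrier G. U i) \<subseteq> V"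
    using product_topology_open_contains_basis[OF assms[unfolded PG_def]]
    unfolding topspace_discrete_topology by blast
  let ?K = "{i \<in> carrier G. U i \<noteq> UNIV}"
  have "cylinder G y ?K \<subseteq> (\<Pi>\<^sub>E i\<in>carrier G. U i)"
  proof
    fix z assume z: "z \<in> cylinder G y ?K"
    have "z i \<in> U i" if i: "i \<in> carrier G" for i
    proof (cases "U i = UNIV")
      case False
      then have "z i = y i" using z i by (simp add: cylinder_def)
      then show ?thesis using U(1) i by auto
    qed simp
    moreover have "z \<in> extensional (carrier G)"
      using z by (simp add: cylinder_def topspace_PG PiE_iff)
    ultimately show "z \<in> (\<Pi>\<^sub>E i\<in>carrier G. U i)" by (simp add: PiE_iff)
  qed
  moreover have "finite ?K"
    using U(2) by (rule finite_subset[rotated]) blast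
  ultimately show thesis
    using U(3) by (intro that[of ?K]) auto
qed

lemma chi_in_closure_of_iff:
  "chi G Y \<in> PG G closure_of (chi G ` \<S>) \<longleftrightarrow>
     (\<forall>K. finite K \<and> K \<subseteq> carrier G \<longrightarrow> (\<exists>Z\<in>\<S>. agrees_on K Z Y))"
proof (intro iffI allI impI)
  fix K assume Y: "chi G Y \<in> PG G closure_of (chi G ` \<S>)" and K: "finite K \<and> K \<subseteq> carrier G"
  have "openin (PG G) (cylinder G (chi G Y) K)" "chi G Y \<in> cylinder G (chi G Y) K"
    using K by (simp_all add: openin_cylinder chi_in_own_cylinder)
  then obtain Z where "Z \<in> \<S>" "chi G Z \<in> cylinder G (chi G Y) K"
    using Y unfolding in_closure_of by blast
  then show "\<exists>Z\<in>\<S>. agrees_on K Z Y"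
    using K chi_in_cylinder_iff by blast
next
  assume agree: "\<forall>K. finite K \<and> K \<subseteq> carrier G \<longrightarrow> (\<exists>Z\<in>\<S>. agrees_on K Z Y)"
  show "chi G Y \<in> PG G closure_of (chi G ` \<S>)"
    unfolding in_closure_of
  proof (intro conjI chi_in_topspace allI impI)
    fix V assume V: "chi G Y \<in> V \<and> openin (PG G) V"
    obtain K where K: "finite K" "K \<subseteq> carrier G" "cylinder G (chi G Y) K \<subseteq> V"
      using cylinder_neighbourhood_base V by blast
    then obtain Z where "Z \<in> \<S>" "agrees_on K Z Y"
      using agree by blast
    then show "\<exists>z. z \<in> chi G ` \<S> \<and> z \<in> V"
      using K chi_in_cylinder_iff by blast
  qed
qed

lemma Wset_iff:
  "Y \<in> Wset G A \<longleftrightarrow> Y \<subseteq> carrier G \<and>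
     (\<forall>K. finite K \<and> K \<subseteq> carrier G \<longrightarrow> infinite {g \<in> carrier G. agrees_on K (A #>\<^bsub>G\<^esub> g) Y})"
  (is "_ \<longleftrightarrow> _ \<and> (\<forall>K. _ \<longrightarrow> infinite (?D K))")
proof -
  have hits_cylinder: "?D K \<subseteq> hits G V A" if "K \<subseteq> carrier G" "cylinder G (chi G Y) K \<subseteq> V" for K V
    unfolding hits_def using that chi_in_cylinder_iff[OF that(1)] by blast
  have "(\<forall>U. (\<exists>V. openin (PG G) V \<and> chi G Y \<in> V \<and> V \<subseteq> U) \<longrightarrow> infinite (hits G U A))
        \<longleftrightarrow> (\<forall>K. finite K \<and> K \<subseteq> carrier G \<longrightarrow> infinite (?D K))"
  proof (intro iffI allI impI)
    fix K assume W: "\<forall>U. (\<exists>V. openin (PG G) V \<and> chi G Y \<in> V \<and> V \<subseteq> U) \<longrightarrow> infinite (hits G U A)"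
      and K: "finite K \<and> K \<subseteq> carrier G"
    have "openin (PG G) (cylinder G (chi G Y) K)" "chi G Y \<in> cylinder G (chi G Y) K"
      using K by (simp_all add: openin_cylinder chi_in_own_cylinder)
    then have "infinite (hits G (cylinder G (chi G Y) K) A)"
      using W by blast
    moreover have "hits G (cylinder G (chi G Y) K) A \<subseteq> ?D K"
      using K chi_in_cylinder_iff by (auto simp: hits_def)
    ultimately show "infinite (?D K)" using infinite_super by blast
  next
    fix U assume D: "\<forall>K. finite K \<and> K \<subseteq> carrier G \<longrightarrow> infinite (?D K)"
      and "\<exists>V. openin (PG G) V \<and> chi G Y \<in> V \<and> V \<subseteq> U"
    then obtain V where V: "openin (PG G) V" "chi G Y \<in> V" "V \<subseteq> U" by blast
    obtain K where K: "finite K" "K \<subseteq> carrier G" "cylinder G (chi G Y) K \<subseteq> V"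
      using cylinder_neighbourhood_base[OF V(1,2)] .
    have "?D K \<subseteq> hits G U A"
      using hits_cylinder K(2,3) V(3) by blast
    then show "infinite (hits G U A)"
      using D K(1,2) infinite_super by blast
  qed
  moreover have "chi G Y \<in> PG G closure_of (chi G ` {A #>\<^bsub>G\<^esub> g | g. g \<in> carrier G})"
    if D: "\<forall>K. finite K \<and> K \<subseteq> carrier G \<longrightarrow> infinite (?D K)"
    unfolding chi_in_closure_of_iff
  proof (intro allI impI)
    fix K assume "finite K \<and> K \<subseteq> carrier G"
    then obtain g where "g \<in> ?D K" using D infinite_imp_nonempty by blast
    then show "\<exists>Z\<in>{A #>\<^bsub>G\<^esub> g | g. g \<in> carrier G}. agrees_on K Z Y" by blast
  qed
  ultimately show ?thesis
    unfolding Wset_def Torb_def mem_Collect_eq by blast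
qed

section \<open>Ultrafilters and their limits\<close>

lemma ultrafilter_onD:
  assumes "ultrafilter_on G p"
  shows ultrafilter_on_subset: "P \<in> p \<Longrightarrow> P \<subseteq> carrier G"
    and ultrafilter_on_carrier: "carrier G \<in> p"
    and ultrafilter_on_nonempty: "P \<in> p \<Longrightarrow> P \<noteq> {}"
    and ultrafilter_on_Int: "P \<in> p \<Longrightarrow> Q \<in> p \<Longrightarrow> P \<inter> Q \<in> p"
    and ultrafilter_on_mono: "P \<in> p \<Longrightarrow> P \<subseteq> Q \<Longrightarrow> Q \<subseteq> carrier G \<Longrightarrow> Q \<in> p"
    and ultrafilter_on_Diff: "P \<subseteq> carrier G \<Longrightarrow> P \<notin> p \<Longrightarrow> carrier G - P \<in> p"
proof -
  have p: "p \<subseteq> Pow (carrier G)" "carrier G \<in> p" "{} \<notin> p"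
    "\<forall>P\<in>p. \<forall>Q\<in>p. P \<inter> Q \<in> p"
    "\<forall>P\<in>p. \<forall>Q. P \<subseteq> Q \<and> Q \<subseteq> carrier G \<longrightarrow> Q \<in> p"
    "\<forall>P. P \<subseteq> carrier G \<longrightarrow> P \<in> p \<or> carrier G - P \<in> p"
    using assms unfolding ultrafilter_on_def by auto
  show "P \<in> p \<Longrightarrow> P \<subseteq> carrier G" using p(1) by blast
  show "carrier G \<in> p" by (fact p(2))
  show "P \<in> p \<Longrightarrow> P \<noteq> {}" using p(3) by blast
  show "P \<in> p \<Longrightarrow> Q \<in> p \<Longrightarrow> P \<inter> Q \<in> p" using p(4) by blast
  show "P \<in> p \<Longrightarrow> P \<subseteq> Q \<Longrightarrow> Q \<subseteq> carrier G \<Longrightarrow> Q \<in> p" using p(5) by blast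
  show "P \<subseteq> carrier G \<Longrightarrow> P \<notin> p \<Longrightarrow> carrier G - P \<in> p" using p(6) by blast
qed

lemma ultrafilter_on_Un:
  assumes p: "ultrafilter_on G p" and PQ: "P \<union> Q \<in> p" "P \<subseteq> carrier G" "Q \<subseteq> carrier G"
  shows "P \<in> p \<or> Q \<in> p"
proof (rule ccontr)
  assume "\<not> (P \<in> p \<or> Q \<in> p)"
  then have "carrier G - P \<in> p" "carrier G - Q \<in> p"
    using PQ(2,3) ultrafilter_on_Diff[OF p] by auto
  then have "(P \<union> Q) \<inter> ((carrier G - P) \<inter> (carrier G - Q)) \<in> p"
    using PQ(1) ultrafilter_on_Int[OF p] by blast
  moreover have "(P \<union> Q) \<inter> ((carrier G - P) \<inter> (carrier G - Q)) = {}" by blast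
  ultimately show False
    using ultrafilter_on_nonempty[OF p] by metis
qed

lemma ultrafilter_on_INT:
  assumes p: "ultrafilter_on G p" and "finite K" "\<And>k. k \<in> K \<Longrightarrow> E k \<in> p"
  shows "carrier G \<inter> (\<Inter>k\<in>K. E k) \<in> p"
  using assms(2,3)
proof (induction K rule: finite_induct)
  case empty
  then show ?case using ultrafilter_on_carrier[OF p] by simp
next
  case (insert k K)
  have "carrier G \<inter> (\<Inter>k\<in>insert k K. E k) = (carrier G \<inter> (\<Inter>k\<in>K. E k)) \<inter> E k" by auto
  then show ?case using insert ultrafilter_on_Int[OF p] by simp
qed

definition fip_on :: "'a set \<Rightarrow> 'a set set \<Rightarrow> bool" where
  "fip_on C Q \<longleftrightarrow> (\<forall>S. finite S \<longrightarrow> S \<subseteq> Q \<longrightarrow> C \<inter> \<Inter>S \<noteq> {})"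

lemma maximal_fip_on_memI:
  assumes M: "M \<subseteq> Pow C" "fip_on C M"
    and max: "\<And>Q. M \<subseteq> Q \<Longrightarrow> Q \<subseteq> Pow C \<Longrightarrow> fip_on C Q \<Longrightarrow> Q = M"
    and P: "P \<subseteq> C" and meets: "\<And>S. finite S \<Longrightarrow> S \<subseteq> M \<Longrightarrow> C \<inter> \<Inter>S \<inter> P \<noteq> {}"
  shows "P \<in> M"
proof -
  have "fip_on C (insert P M)"
    unfolding fip_on_def
  proof (intro allI impI)
    fix S assume S: "finite S" "S \<subseteq> insert P M"
    show "C \<inter> \<Inter>S \<noteq> {}"
    proof (cases "P \<in> S")
      case True
      have "C \<inter> \<Inter>S = C \<inter> \<Inter>(S - {P}) \<inter> P" using True by auto
      then show ?thesis using meets[of "S - {P}"] S by auto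
    next
      case False
      then show ?thesis using M(2) S by (auto simp: fip_on_def)
    qed
  qed
  then have "insert P M = M" using max M P by blast
  then show ?thesis by blast
qed

lemma maximal_fip_on_ultrafilter_on:
  assumes M: "M \<subseteq> Pow (carrier G)" "fip_on (carrier G) M"
    and max: "\<And>Q. M \<subseteq> Q \<Longrightarrow> Q \<subseteq> Pow (carrier G) \<Longrightarrow> fip_on (carrier G) Q \<Longrightarrow> Q = M"
  shows "ultrafilter_on G M"
proof -
  let ?C = "carrier G"
  have meets: "?C \<inter> \<Inter>S \<noteq> {}" if "finite S" "S \<subseteq> M" for S
    using M(2) that by (simp add: fip_on_def)
  have mem: "P \<in> M"
    if "P \<subseteq> ?C" "\<And>S. finite S \<Longrightarrow> S \<subseteq> M \<Longrightarrow> ?C \<inter> \<Inter>S \<inter> P \<noteq> {}" for P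
  proof (rule maximal_fip_on_memI[of M ?C])
    show "\<And>Q. M \<subseteq> Q \<Longrightarrow> Q \<subseteq> Pow ?C \<Longrightarrow> fip_on ?C Q \<Longrightarrow> Q = M" by (rule max)
  qed (use M that in auto)
  show ?thesis
    unfolding ultrafilter_on_def
  proof (intro conjI ballI allI impI)
    show "M \<subseteq> Pow ?C" by (rule M(1))
    show "?C \<in> M" by (rule mem) (use meets in auto)
    show "{} \<notin> M" using meets[of "{{}}"] by auto
  next
    fix P Q assume PQ: "P \<in> M" "Q \<in> M"
    show "P \<inter> Q \<in> M"
    proof (rule mem)
      show "P \<inter> Q \<subseteq> ?C" using PQ M(1) by blast
      fix S assume "finite S" "S \<subseteq> M"
      then show "?C \<inter> \<Inter>S \<inter> (P \<inter> Q) \<noteq> {}"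
        using meets[of "insert P (insert Q S)"] PQ by auto
    qed
  next
    fix P Q assume PQ: "P \<in> M" "P \<subseteq> Q \<and> Q \<subseteq> ?C"
    show "Q \<in> M"
    proof (rule mem)
      show "Q \<subseteq> ?C" using PQ by blast
      fix S assume "finite S" "S \<subseteq> M"
      then show "?C \<inter> \<Inter>S \<inter> Q \<noteq> {}"
        using meets[of "insert P S"] PQ by auto
    qed
  next
    fix P assume P: "P \<subseteq> ?C"
    show "P \<in> M \<or> ?C - P \<in> M"
    proof (rule ccontr)
      assume "\<not> (P \<in> M \<or> ?C - P \<in> M)"
      then have "P \<notin> M" "?C - P \<notin> M" by auto
      then obtain S1 S2 where "finite S1" "S1 \<subseteq> M" "?C \<inter> \<Inter>S1 \<inter> P = {}"
        and "finite S2" "S2 \<subseteq> M" "?C \<inter> \<Inter>S2 \<inter> (?C - P) = {}"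
        using mem[OF P] mem[of "?C - P"] by (metis Diff_subset)
      then have "?C \<inter> \<Inter>(S1 \<union> S2) = {}" by blast
      then show False using meets[of "S1 \<union> S2"] \<open>finite S1\<close> \<open>finite S2\<close> \<open>S1 \<subseteq> M\<close> \<open>S2 \<subseteq> M\<close> by blast
    qed
  qed
qed

lemma fip_on_extends_to_ultrafilter_on:
  assumes "F \<subseteq> Pow (carrier G)" "fip_on (carrier G) F"
  obtains p where "ultrafilter_on G p" "F \<subseteq> p"
proof -
  let ?C = "carrier G"
  define \<Q> where "\<Q> = {Q. F \<subseteq> Q \<and> Q \<subseteq> Pow ?C \<and> fip_on ?C Q}"
  have "\<exists>M\<in>\<Q>. \<forall>Q\<in>\<Q>. M \<subseteq> Q \<longrightarrow> Q = M"
  proof (rule subset_Zorn_nonempty)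
    show "\<Q> \<noteq> {}" using assms by (auto simp: \<Q>_def)
  next
    fix \<C> assume \<C>: "\<C> \<noteq> {}" "subset.chain \<Q> \<C>"
    have "fip_on ?C (\<Union>\<C>)"
      unfolding fip_on_def
    proof (intro allI impI)
      fix S assume S: "finite S" "S \<subseteq> \<Union>\<C>"
      obtain Q where "Q \<in> \<C>" "S \<subseteq> Q"
        using finite_subset_Union_chain[OF S \<C>] .
      then show "?C \<inter> \<Inter>S \<noteq> {}" using \<C>(2) S by (auto simp: subset_chain_def \<Q>_def fip_on_def)
    qed
    moreover have "F \<subseteq> \<Union>\<C>" "\<Union>\<C> \<subseteq> Pow ?C"
      using \<C> by (fastforce simp: subset_chain_def \<Q>_def)+
    ultimately show "\<Union>\<C> \<in> \<Q>" by (simp add: \<Q>_def)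
  qed
  then obtain M where M: "M \<in> \<Q>" and max: "\<And>Q. Q \<in> \<Q> \<Longrightarrow> M \<subseteq> Q \<Longrightarrow> Q = M" by blast
  have "ultrafilter_on G M"
  proof (rule maximal_fip_on_ultrafilter_on)
    show "M \<subseteq> Pow ?C" "fip_on ?C M" using M by (simp_all add: \<Q>_def)
    fix Q assume "M \<subseteq> Q" "Q \<subseteq> Pow ?C" "fip_on ?C Q"
    moreover have "F \<subseteq> M" using M by (simp add: \<Q>_def)
    ultimately have "Q \<in> \<Q>" by (auto simp: \<Q>_def)
    then show "Q = M" using max \<open>M \<subseteq> Q\<close> by blast
  qed
  moreover have "F \<subseteq> M" using M by (simp add: \<Q>_def)
  ultimately show thesis by (rule that)
qed

lemma fip_on_add_cofinite:
  assumes inf: "\<And>S. finite S \<Longrightarrow> S \<subseteq> F \<Longrightarrow> infinite (C \<inter> \<Inter>S)"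
  shows "fip_on C (F \<union> {C - E | E. finite E})"
  unfolding fip_on_def
proof (intro allI impI)
  fix S assume S: "finite S" "S \<subseteq> F \<union> {C - E | E. finite E}"
  define S1 where "S1 = S \<inter> F"
  define S2 where "S2 = S - F"
  have "finite (C - Q)" if "Q \<in> S2" for Q
  proof -
    have "Q \<in> {C - E | E. finite E}"
      using that S(2) unfolding S2_def by blast
    then obtain E where "finite E" "Q = C - E" by blast
    then show ?thesis by (simp add: Diff_Diff_Int)
  qed
  moreover have "finite S2" using S(1) by (simp add: S2_def)
  ultimately have "finite (\<Union>Q\<in>S2. C - Q)" by (rule finite_UN_I[rotated])
  moreover have "infinite (C \<inter> \<Inter>S1)"
    using S by (intro inf) (auto simp: S1_def)
  ultimately have "infinite ((C \<inter> \<Inter>S1) - (\<Union>Q\<in>S2. C - Q))"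
    by (simp add: Diff_infinite_finite)
  moreover have "(C \<inter> \<Inter>S1) - (\<Union>Q\<in>S2. C - Q) \<subseteq> C \<inter> \<Inter>S"
    unfolding S1_def S2_def by blast
  ultimately have "infinite (C \<inter> \<Inter>S)" by (rule infinite_super[rotated])
  then show "C \<inter> \<Inter>S \<noteq> {}" by auto
qed

lemma free_ultrafilter_on_extends:
  assumes F: "F \<subseteq> Pow (carrier G)"
    and inf: "\<And>S. finite S \<Longrightarrow> S \<subseteq> F \<Longrightarrow> infinite (carrier G \<inter> \<Inter>S)"
  obtains p where "free_ultrafilter_on G p" "F \<subseteq> p"
proof -
  let ?C = "carrier G"
  define F' where "F' = F \<union> {?C - E | E. finite E}"
  have fip: "fip_on ?C F'"
    unfolding F'_def using inf by (rule fip_on_add_cofinite)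
  have "F' \<subseteq> Pow ?C" using F unfolding F'_def by blast
  then obtain p where p: "ultrafilter_on G p" "F' \<subseteq> p"
    using fip by (rule fip_on_extends_to_ultrafilter_on)
  have "infinite P" if "P \<in> p" for P
  proof
    assume "finite P"
    then have "?C - P \<in> F'" unfolding F'_def by blast
    then have "?C - P \<in> p" using p(2) by blast
    then have "P \<inter> (?C - P) \<in> p" using ultrafilter_on_Int[OF p(1) \<open>P \<in> p\<close>] by blast
    then show False using ultrafilter_on_nonempty[OF p(1)] by blast
  qed
  then have "free_ultrafilter_on G p" using p(1) by (simp add: free_ultrafilter_on_def)
  moreover have "F \<subseteq> p" using p(2) by (simp add: F'_def)
  ultimately show thesis by (rule that)
qed

text \<open>The limit of the family \<open>\<phi>\<close> along \<open>p\<close> in the product space \<open>P_G\<close>.\<close>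

definition uf_lim :: "('a, 'b) monoid_scheme \<Rightarrow> 'a set set \<Rightarrow> ('a \<Rightarrow> 'a set) \<Rightarrow> 'a set" where
  "uf_lim G p \<phi> = {x \<in> carrier G. {g \<in> carrier G. x \<in> \<phi> g} \<in> p}"

lemma agrees_on_uf_lim:
  assumes p: "ultrafilter_on G p" and K: "finite K" "K \<subseteq> carrier G"
  shows "{g \<in> carrier G. agrees_on K (\<phi> g) (uf_lim G p \<phi>)} \<in> p"
proof -
  define E where "E k = {g \<in> carrier G. k \<in> \<phi> g \<longleftrightarrow> k \<in> uf_lim G p \<phi>}" for k
  have "E k \<in> p" if "k \<in> K" for k
  proof (cases "k \<in> uf_lim G p \<phi>")
    case True
    then show ?thesis by (simp add: E_def uf_lim_def)
  next
    case False
    then have "{g \<in> carrier G. k \<in> \<phi> g} \<notin> p" using that K(2) by (auto simp: uf_lim_def)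
    then have "carrier G - {g \<in> carrier G. k \<in> \<phi> g} \<in> p"
      by (intro ultrafilter_on_Diff[OF p]) auto
    moreover have "E k = carrier G - {g \<in> carrier G. k \<in> \<phi> g}"
      using False by (auto simp: E_def)
    ultimately show ?thesis by simp
  qed
  then have "carrier G \<inter> (\<Inter>k\<in>K. E k) \<in> p"
    by (rule ultrafilter_on_INT[OF p K(1)])
  moreover have "carrier G \<inter> (\<Inter>k\<in>K. E k) = {g \<in> carrier G. agrees_on K (\<phi> g) (uf_lim G p \<phi>)}"
    by (auto simp: E_def agrees_on_def)
  ultimately show ?thesis by simp
qed

lemma chi_uf_lim_in_closure_of:
  assumes p: "ultrafilter_on G p" and "B \<in> p"
  shows "chi G (uf_lim G p \<phi>) \<in> PG G closure_of (chi G ` \<phi> ` B)"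
  unfolding chi_in_closure_of_iff
proof (intro allI impI)
  fix K assume K: "finite K \<and> K \<subseteq> carrier G"
  then have "{g \<in> carrier G. agrees_on K (\<phi> g) (uf_lim G p \<phi>)} \<inter> B \<in> p"
    using agrees_on_uf_lim[OF p] \<open>B \<in> p\<close> by (simp add: ultrafilter_on_Int[OF p])
  then have "{g \<in> carrier G. agrees_on K (\<phi> g) (uf_lim G p \<phi>)} \<inter> B \<noteq> {}"
    by (rule ultrafilter_on_nonempty[OF p])
  then obtain b where "b \<in> B" "agrees_on K (\<phi> b) (uf_lim G p \<phi>)" by blast
  then show "\<exists>Z\<in>\<phi> ` B. agrees_on K Z (uf_lim G p \<phi>)" by blast
qed

lemma uf_lim_in_Wset:
  assumes "free_ultrafilter_on G p"
  shows "uf_lim G p (\<lambda>g. A #>\<^bsub>G\<^esub> g) \<in> Wset G A"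
  unfolding Wset_iff
proof (intro conjI allI impI)
  have p: "ultrafilter_on G p" using assms by (simp add: free_ultrafilter_on_def)
  show "uf_lim G p (\<lambda>g. A #>\<^bsub>G\<^esub> g) \<subseteq> carrier G" by (auto simp: uf_lim_def)
  fix K assume "finite K \<and> K \<subseteq> carrier G"
  then have "{g \<in> carrier G. agrees_on K (A #>\<^bsub>G\<^esub> g) (uf_lim G p (\<lambda>g. A #>\<^bsub>G\<^esub> g))} \<in> p"
    using agrees_on_uf_lim[OF p] by blast
  then show "infinite {g \<in> carrier G. agrees_on K (A #>\<^bsub>G\<^esub> g) (uf_lim G p (\<lambda>g. A #>\<^bsub>G\<^esub> g))}"
    using assms by (simp add: free_ultrafilter_on_def)
qed

section \<open>Thin and sparse sets\<close>

lemma (in group) translates_containing_inv_image: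
  assumes A: "A \<subseteq> carrier G" and F: "F \<subseteq> carrier G"
  shows "{g \<in> carrier G. m_inv G ` F \<subseteq> A #> g} = m_inv G ` (carrier G \<inter> (\<Inter>f\<in>F. f <# A))"
proof (intro Set.set_eqI iffI)
  fix g assume g: "g \<in> {g \<in> carrier G. m_inv G ` F \<subseteq> A #> g}"
  have "inv g \<in> f <# A" if "f \<in> F" for f
    using g that F inv_mem_r_coset_iff[OF A, of f g] by auto
  then have "inv g \<in> carrier G \<inter> (\<Inter>f\<in>F. f <# A)" using g by auto
  moreover have "g = inv (inv g)" using g by simp
  ultimately show "g \<in> m_inv G ` (carrier G \<inter> (\<Inter>f\<in>F. f <# A))" by (rule rev_image_eqI)
next
  fix g assume "g \<in> m_inv G ` (carrier G \<inter> (\<Inter>f\<in>F. f <# A))"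
  then obtain h where h: "h \<in> carrier G" "\<forall>f\<in>F. h \<in> f <# A" "g = inv h" by blast
  have "inv f \<in> A #> g" if "f \<in> F" for f
    using that h F inv_mem_r_coset_iff[OF A, of f g] by auto
  then show "g \<in> {g \<in> carrier G. m_inv G ` F \<subseteq> A #> g}" using h by auto
qed

lemma (in group) Wset_contains_inv_image_iff:
  assumes A: "A \<subseteq> carrier G" and F: "F \<subseteq> carrier G"
  shows "(\<exists>Y\<in>Wset G A. m_inv G ` F \<subseteq> Y) \<longleftrightarrow>
    (\<forall>F'\<subseteq>F. finite F' \<longrightarrow> infinite (carrier G \<inter> (\<Inter>f\<in>F'. f <# A)))"
proof (intro iffI allI impI)
  fix F' assume "\<exists>Y\<in>Wset G A. m_inv G ` F \<subseteq> Y" and F': "F' \<subseteq> F" "finite F'"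
  then obtain Y where Y: "Y \<in> Wset G A" "m_inv G ` F' \<subseteq> Y" by blast
  have F'C: "F' \<subseteq> carrier G" using F' F by blast
  have "finite (m_inv G ` F')" "m_inv G ` F' \<subseteq> carrier G" using F'(2) F'C by auto
  then have "infinite {g \<in> carrier G. agrees_on (m_inv G ` F') (A #> g) Y}"
    using Y(1) unfolding Wset_iff by blast
  moreover have "{g \<in> carrier G. agrees_on (m_inv G ` F') (A #> g) Y} \<subseteq>
      {g \<in> carrier G. m_inv G ` F' \<subseteq> A #> g}"
    using Y(2) by (auto simp: agrees_on_def)
  ultimately have "infinite (m_inv G ` (carrier G \<inter> (\<Inter>f\<in>F'. f <# A)))"
    unfolding translates_containing_inv_image[OF A F'C] by (rule infinite_super[rotated])
  then show "infinite (carrier G \<inter> (\<Inter>f\<in>F'. f <# A))" by (rule contrapos_nn) simp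
next
  assume inf: "\<forall>F'\<subseteq>F. finite F' \<longrightarrow> infinite (carrier G \<inter> (\<Inter>f\<in>F'. f <# A))"
  define D where "D f = {g \<in> carrier G. inv f \<in> A #> g}" for f
  obtain p where p: "free_ultrafilter_on G p" "D ` F \<subseteq> p"
  proof (rule free_ultrafilter_on_extends)
    show "D ` F \<subseteq> Pow (carrier G)" by (auto simp: D_def)
    fix S assume "finite S" "S \<subseteq> D ` F"
    then obtain F' where F': "F' \<subseteq> F" "finite F'" "S = D ` F'"
      by (rule finite_subset_image[elim_format]) blast
    have F'C: "F' \<subseteq> carrier G" using F'(1) F by blast
    have "carrier G \<inter> \<Inter>S = {g \<in> carrier G. m_inv G ` F' \<subseteq> A #> g}"
      unfolding F'(3) D_def by blast
    also have "\<dots> = m_inv G ` (carrier G \<inter> (\<Inter>f\<in>F'. f <# A))"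
      by (rule translates_containing_inv_image[OF A F'C])
    finally show "infinite (carrier G \<inter> \<Inter>S)"
      using inf F'(1,2) finite_inv_image_iff[of "carrier G \<inter> (\<Inter>f\<in>F'. f <# A)"] by simp
  qed
  have "m_inv G ` F \<subseteq> uf_lim G p (\<lambda>g. A #> g)"
    using p(2) F by (auto simp: uf_lim_def D_def)
  then show "\<exists>Y\<in>Wset G A. m_inv G ` F \<subseteq> Y"
    using uf_lim_in_Wset[OF p(1)] by blast
qed

lemma (in group) Wset_contains_finite_inv_image_iff:
  assumes A: "A \<subseteq> carrier G" and F: "F \<subseteq> carrier G" "finite F"
  shows "(\<exists>Y\<in>Wset G A. m_inv G ` F \<subseteq> Y) \<longleftrightarrow> infinite (carrier G \<inter> (\<Inter>f\<in>F. f <# A))"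
  unfolding Wset_contains_inv_image_iff[OF A F(1)]
proof (intro iffI allI impI)
  fix F' assume inf: "infinite (carrier G \<inter> (\<Inter>f\<in>F. f <# A))" and "F' \<subseteq> F"
  then have "carrier G \<inter> (\<Inter>f\<in>F. f <# A) \<subseteq> carrier G \<inter> (\<Inter>f\<in>F'. f <# A)" by blast
  then show "infinite (carrier G \<inter> (\<Inter>f\<in>F'. f <# A))" using inf by (rule infinite_super)
next
  assume "\<forall>F'\<subseteq>F. finite F' \<longrightarrow> infinite (carrier G \<inter> (\<Inter>f\<in>F'. f <# A))"
  then show "infinite (carrier G \<inter> (\<Inter>f\<in>F. f <# A))" using F(2) by blast
qed

lemma finite_card_le_iff_no_subset_card_Suc:
  "finite Y \<and> card Y \<le> n \<longleftrightarrow> (\<forall>F\<subseteq>Y. card F \<noteq> Suc n)"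
proof
  assume Y: "finite Y \<and> card Y \<le> n"
  show "\<forall>F\<subseteq>Y. card F \<noteq> Suc n"
  proof (intro allI impI)
    fix F assume "F \<subseteq> Y"
    then have "card F \<le> card Y" using Y by (intro card_mono) auto
    then show "card F \<noteq> Suc n" using Y by linarith
  qed
next
  assume no: "\<forall>F\<subseteq>Y. card F \<noteq> Suc n"
  show "finite Y \<and> card Y \<le> n"
  proof (rule ccontr)
    assume "\<not> (finite Y \<and> card Y \<le> n)"
    then obtain F where "F \<subseteq> Y" "card F = Suc n"
    proof (cases "finite Y")
      case True
      then have "Suc n \<le> card Y" using \<open>\<not> (finite Y \<and> card Y \<le> n)\<close> by simp
      then show thesis using that by (rule obtain_subset_with_card_n)
    next
      case False
      then show thesis using that infinite_arbitrarily_large[of Y "Suc n"] by blast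
    qed
    then show False using no by blast
  qed
qed

lemma (in group) n_thin_iff_Wset_card_le:
  assumes A: "A \<subseteq> carrier G"
  shows "n_thin G n A \<longleftrightarrow> (\<forall>Y\<in>Wset G A. finite Y \<and> card Y \<le> n)"
proof -
  have thin_iff: "finite (\<Inter>f\<in>F. f <# A) \<longleftrightarrow> \<not> (\<exists>Y\<in>Wset G A. m_inv G ` F \<subseteq> Y)"
    if F: "F \<subseteq> carrier G" "card F = Suc n" for F
  proof -
    have "finite F" using F(2) by (simp add: card_ge_0_finite)
    obtain f0 where "f0 \<in> F" using F(2) by force
    then have "(\<Inter>f\<in>F. f <# A) \<subseteq> carrier G"
      using F(1) l_coset_subset_G[OF A, of f0] by blast
    then have "carrier G \<inter> (\<Inter>f\<in>F. f <# A) = (\<Inter>f\<in>F. f <# A)" by (rule Int_absorb1)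
    then show ?thesis
      using Wset_contains_finite_inv_image_iff[OF A F(1) \<open>finite F\<close>] by simp
  qed
  have "n_thin G n A \<longleftrightarrow>
      (\<forall>F. F \<subseteq> carrier G \<and> card F = Suc n \<longrightarrow> \<not> (\<exists>Y\<in>Wset G A. m_inv G ` F \<subseteq> Y))"
    unfolding n_thin_def using thin_iff by (intro all_cong1 imp_cong) auto
  also have "\<dots> \<longleftrightarrow> (\<forall>Y\<in>Wset G A. \<forall>F\<subseteq>Y. card F \<noteq> Suc n)"
  proof (intro iffI ballI allI impI)
    fix Y F assume no: "\<forall>F. F \<subseteq> carrier G \<and> card F = Suc n \<longrightarrow> \<not> (\<exists>Y\<in>Wset G A. m_inv G ` F \<subseteq> Y)"
      and Y: "Y \<in> Wset G A" and "F \<subseteq> Y"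
    then have FC: "F \<subseteq> carrier G" by (auto simp: Wset_iff)
    then have "m_inv G ` (m_inv G ` F) \<subseteq> Y" using \<open>F \<subseteq> Y\<close> by (simp add: inv_image_inv_image)
    moreover have "m_inv G ` F \<subseteq> carrier G" using FC by auto
    ultimately have "card (m_inv G ` F) \<noteq> Suc n" using no Y by blast
    then show "card F \<noteq> Suc n" by (simp add: card_inv_image FC)
  next
    fix F assume "\<forall>Y\<in>Wset G A. \<forall>F\<subseteq>Y. card F \<noteq> Suc n" "F \<subseteq> carrier G \<and> card F = Suc n"
    then show "\<not> (\<exists>Y\<in>Wset G A. m_inv G ` F \<subseteq> Y)" by (metis card_inv_image)
  qed
  also have "\<dots> \<longleftrightarrow> (\<forall>Y\<in>Wset G A. finite Y \<and> card Y \<le> n)"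
    by (simp add: finite_card_le_iff_no_subset_card_Suc)
  finally show ?thesis .
qed

lemma (in group) sparse_iff_Wset_finite:
  assumes A: "A \<subseteq> carrier G"
  shows "sparse G A \<longleftrightarrow> (\<forall>Y\<in>Wset G A. finite Y)"
proof -
  have "(\<exists>F. F \<subseteq> S \<and> finite F \<and> finite (carrier G \<inter> (\<Inter>f\<in>F. f <# A))) \<longleftrightarrow>
      \<not> (\<exists>Y\<in>Wset G A. m_inv G ` S \<subseteq> Y)" if "S \<subseteq> carrier G" for S
    unfolding Wset_contains_inv_image_iff[OF A that] by blast
  then have "sparse G A \<longleftrightarrow>
      (\<forall>S. S \<subseteq> carrier G \<and> infinite S \<longrightarrow> \<not> (\<exists>Y\<in>Wset G A. m_inv G ` S \<subseteq> Y))"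
    unfolding sparse_def by (intro all_cong1 imp_cong) auto
  also have "\<dots> \<longleftrightarrow> (\<forall>Y\<in>Wset G A. finite Y)"
  proof (intro iffI ballI allI impI)
    fix Y assume no: "\<forall>S. S \<subseteq> carrier G \<and> infinite S \<longrightarrow> \<not> (\<exists>Y\<in>Wset G A. m_inv G ` S \<subseteq> Y)"
      and Y: "Y \<in> Wset G A"
    then have YC: "Y \<subseteq> carrier G" by (auto simp: Wset_iff)
    then have "m_inv G ` (m_inv G ` Y) \<subseteq> Y" by (simp add: inv_image_inv_image)
    moreover have "m_inv G ` Y \<subseteq> carrier G" using YC by auto
    ultimately have "finite (m_inv G ` Y)" using no Y by blast
    then show "finite Y" by (simp add: finite_inv_image_iff YC)
  next
    fix S assume "\<forall>Y\<in>Wset G A. finite Y" "S \<subseteq> carrier G \<and> infinite S"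
    then show "\<not> (\<exists>Y\<in>Wset G A. m_inv G ` S \<subseteq> Y)"
      by (metis finite_inv_image_iff finite_subset)
  qed
  finally show ?thesis .
qed

section \<open>Scattered sets\<close>

text \<open>A maximal \<open>T\<close> with \<open>f T \<inter> T = {}\<close> (Zorn) cannot be enlarged by any point outside
  \<open>T \<union> f\<inverse>T \<union> f T\<close>.\<close>

lemma fixed_point_free_cover:
  assumes "\<And>x. x \<in> C \<Longrightarrow> f x \<noteq> x"
  obtains T where "T \<subseteq> C" "\<forall>x\<in>T. f x \<notin> T" "\<forall>y\<in>C. y \<in> T \<or> f y \<in> T \<or> (\<exists>x\<in>T. f x = y)"
proof -
  define \<T> where "\<T> = {T. T \<subseteq> C \<and> (\<forall>x\<in>T. f x \<notin> T)}"
  have "\<exists>M\<in>\<T>. \<forall>T\<in>\<T>. M \<subseteq> T \<longrightarrow> T = M"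
  proof (rule subset_Zorn_nonempty)
    show "\<T> \<noteq> {}" by (auto simp: \<T>_def)
  next
    fix \<C> assume \<C>: "\<C> \<noteq> {}" "subset.chain \<T> \<C>"
    have "f x \<notin> \<Union>\<C>" if x: "x \<in> \<Union>\<C>" for x
    proof
      assume "f x \<in> \<Union>\<C>"
      then obtain T1 T2 where "T1 \<in> \<C>" "T2 \<in> \<C>" "x \<in> T1" "f x \<in> T2" using x by blast
      moreover have "T1 \<subseteq> T2 \<or> T2 \<subseteq> T1" using \<C>(2) calculation(1,2) by (simp add: subset_chain_def)
      moreover have "\<forall>z\<in>T1. f z \<notin> T1" "\<forall>z\<in>T2. f z \<notin> T2"
        using \<C>(2) calculation(1,2) by (auto simp: subset_chain_def \<T>_def)
      ultimately show False by blast
    qed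
    moreover have "\<Union>\<C> \<subseteq> C" using \<C>(2) by (auto simp: subset_chain_def \<T>_def)
    ultimately show "\<Union>\<C> \<in> \<T>" by (simp add: \<T>_def)
  qed
  then obtain M where M: "M \<subseteq> C" "\<forall>x\<in>M. f x \<notin> M"
    and max: "\<And>T. T \<in> \<T> \<Longrightarrow> M \<subseteq> T \<Longrightarrow> T = M"
    by (auto simp: \<T>_def)
  have "\<forall>y\<in>C. y \<in> M \<or> f y \<in> M \<or> (\<exists>x\<in>M. f x = y)"
  proof
    fix y assume y: "y \<in> C"
    show "y \<in> M \<or> f y \<in> M \<or> (\<exists>x\<in>M. f x = y)"
    proof (rule ccontr)
      assume none: "\<not> (y \<in> M \<or> f y \<in> M \<or> (\<exists>x\<in>M. f x = y))"
      then have "insert y M \<in> \<T>" using y M assms by (auto simp: \<T>_def)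
      then show False using max none by blast
    qed
  qed
  with M show thesis by (rule that)
qed

lemma (in group) finite_r_coset_iff:
  assumes "S \<subseteq> carrier G" "g \<in> carrier G"
  shows "finite (S #> g) \<longleftrightarrow> finite S"
proof -
  obtain h where "bij_betw h S (S #> g)"
    using card_cosets_equal[OF rcosetsI[OF assms] assms(1)] by blast
  then show ?thesis by (rule bij_betw_finite[symmetric])
qed

lemma (in group) uf_lmult_mult:
  assumes p: "ultrafilter_on G p" and "a \<in> carrier G" "b \<in> carrier G"
  shows "uf_lmult G a (uf_lmult G b p) = uf_lmult G (a \<otimes> b) p"
proof -
  have "a <# (b <# P) = (a \<otimes> b) <# P" if "P \<in> p" for P
    using lcos_m_assoc[OF ultrafilter_on_subset[OF p that]] assms(2,3) .
  then show ?thesis unfolding uf_lmult_def image_image by (intro image_cong) auto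
qed

lemma (in group) uf_lmult_one:
  assumes p: "ultrafilter_on G p"
  shows "uf_lmult G \<one> p = p"
proof -
  have "\<one> <# P = P" if "P \<in> p" for P
    using lcos_mult_one[OF ultrafilter_on_subset[OF p that]] .
  then show ?thesis unfolding uf_lmult_def by simp
qed

lemma (in group) mem_uf_lmult_iff:
  assumes p: "ultrafilter_on G p" and x: "x \<in> carrier G" and B: "B \<subseteq> carrier G"
  shows "B \<in> uf_lmult G x p \<longleftrightarrow> inv x <# B \<in> p"
proof
  assume "B \<in> uf_lmult G x p"
  then obtain P where P: "P \<in> p" "B = x <# P" by (auto simp: uf_lmult_def)
  have "inv x <# B = (inv x \<otimes> x) <# P"
    using P lcos_m_assoc[OF ultrafilter_on_subset[OF p P(1)]] x by simp
  then show "inv x <# B \<in> p"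
    using P(1) lcos_mult_one[OF ultrafilter_on_subset[OF p P(1)]] x by simp
next
  assume "inv x <# B \<in> p"
  moreover have "B = x <# (inv x <# B)"
    using lcos_m_assoc[OF B] lcos_mult_one[OF B] x by simp
  ultimately show "B \<in> uf_lmult G x p" unfolding uf_lmult_def by blast
qed

lemma (in group) uf_lmult_fixed_recurrent:
  assumes p: "ultrafilter_on G p" and g: "g \<in> carrier G" and fixed: "uf_lmult G g p = p"
    and "Z \<in> p"
  shows "\<exists>z\<in>Z. g \<otimes> z \<in> Z"
proof -
  have Z: "Z \<subseteq> carrier G" using ultrafilter_on_subset[OF p \<open>Z \<in> p\<close>] .
  have "inv g <# Z \<in> p"
    using mem_uf_lmult_iff[OF p g Z] fixed \<open>Z \<in> p\<close> by simp
  then have "Z \<inter> (inv g <# Z) \<noteq> {}"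
    using ultrafilter_on_nonempty[OF p] ultrafilter_on_Int[OF p \<open>Z \<in> p\<close>] by blast
  then obtain z where "z \<in> Z" "z \<in> inv g <# Z" by blast
  moreover have "z \<in> carrier G" using \<open>z \<in> Z\<close> Z by blast
  ultimately show ?thesis using l_coset_mem_iff[OF Z, of "inv g" z] g by auto
qed

text \<open>Each of the three pieces of the cover is moved off itself by \<open>g\<close>, yet one of them lies in \<open>p\<close>.\<close>

lemma (in group) uf_lmult_fixed_imp_one:
  assumes p: "ultrafilter_on G p" and g: "g \<in> carrier G" and fixed: "uf_lmult G g p = p"
  shows "g = \<one>"
proof (rule ccontr)
  assume "g \<noteq> \<one>"
  then have "g \<otimes> x \<noteq> x" if "x \<in> carrier G" for x
    using that g by (metis l_one one_closed r_cancel)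
  then obtain T where T: "T \<subseteq> carrier G" "\<forall>x\<in>T. g \<otimes> x \<notin> T"
    and cover: "\<forall>y\<in>carrier G. y \<in> T \<or> g \<otimes> y \<in> T \<or> (\<exists>x\<in>T. g \<otimes> x = y)"
    by (rule fixed_point_free_cover[where f = "\<lambda>x. g \<otimes> x"])
  define T1 where "T1 = {y \<in> carrier G. g \<otimes> y \<in> T}"
  define T2 where "T2 = {y \<in> carrier G. \<exists>x\<in>T. g \<otimes> x = y}"
  have T12: "T1 \<subseteq> carrier G" "T2 \<subseteq> carrier G" by (auto simp: T1_def T2_def)
  have free: "\<forall>z\<in>Z. g \<otimes> z \<notin> Z" if "Z \<in> {T, T1, T2}" for Z
  proof -
    have "g \<otimes> x \<noteq> g \<otimes> (g \<otimes> x')" if "x \<in> T" "x' \<in> T" for x x'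
      using T that g by (metis m_closed subsetD l_cancel)
    then show ?thesis using that T(2) by (auto simp: T1_def T2_def)
  qed
  have "T \<union> T1 \<union> T2 = carrier G" using T(1) cover g by (auto simp: T1_def T2_def)
  then have "T \<union> T1 \<union> T2 \<in> p" using ultrafilter_on_carrier[OF p] by simp
  then have "T \<union> T1 \<in> p \<or> T2 \<in> p"
    by (rule ultrafilter_on_Un[OF p]) (use T(1) T12 in blast)+
  then obtain Z where Z: "Z \<in> {T, T1, T2}" "Z \<in> p"
    using ultrafilter_on_Un[OF p _ T(1) T12(1)] by blast
  obtain z where "z \<in> Z" "g \<otimes> z \<in> Z"
    using uf_lmult_fixed_recurrent[OF p g fixed Z(2)] by blast
  then show False using free[OF Z(1)] by blast
qed

lemma (in group) inj_on_uf_lmult: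
  assumes p: "ultrafilter_on G p"
  shows "inj_on (\<lambda>x. uf_lmult G x p) (carrier G)"
proof (rule inj_onI)
  fix x y assume x: "x \<in> carrier G" and y: "y \<in> carrier G"
    and eq: "uf_lmult G x p = uf_lmult G y p"
  have "uf_lmult G (inv y \<otimes> x) p = uf_lmult G (inv y) (uf_lmult G x p)"
    using uf_lmult_mult[OF p] x y by simp
  also have "\<dots> = uf_lmult G (inv y \<otimes> y) p"
    using eq uf_lmult_mult[OF p] y by simp
  also have "\<dots> = p"
    using uf_lmult_one[OF p] y by simp
  finally have "inv y \<otimes> x = \<one>"
    using uf_lmult_fixed_imp_one[OF p] x y by simp
  then show "x = y" using x y inv_solve_left'[of "\<one>" y x] by simp
qed

lemma (in group) uf_lim_right_translates:
  assumes p: "ultrafilter_on G p" and B: "B \<subseteq> carrier G"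
  shows "uf_lim G p (\<lambda>b. B #> inv b) = {x \<in> carrier G. B \<in> uf_lmult G x p}"
proof -
  have "{b \<in> carrier G. x \<in> B #> inv b} = inv x <# B" if x: "x \<in> carrier G" for x
  proof -
    have "x \<in> B #> inv b \<longleftrightarrow> b \<in> inv x <# B" if "b \<in> carrier G" for b
      using that x r_coset_mem_iff[OF B, of "inv b" x] l_coset_mem_iff[OF B, of "inv x" b] by simp
    moreover have "inv x <# B \<subseteq> carrier G" using l_coset_subset_G[OF B] x by simp
    ultimately show ?thesis by (auto simp del: l_coset_consistent)
  qed
  then have "x \<in> uf_lim G p (\<lambda>b. B #> inv b) \<longleftrightarrow> B \<in> uf_lmult G x p" if "x \<in> carrier G" for x
    using that mem_uf_lmult_iff[OF p that B] by (simp add: uf_lim_def)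
  then show ?thesis by (auto simp: uf_lim_def)
qed

lemma (in group) finite_Delta_iff:
  assumes p: "ultrafilter_on G p" and B: "B \<subseteq> carrier G"
  shows "finite (Delta G p B) \<longleftrightarrow> finite (uf_lim G p (\<lambda>b. B #> inv b))"
proof -
  have "Delta G p B = (\<lambda>x. uf_lmult G x p) ` uf_lim G p (\<lambda>b. B #> inv b)"
    unfolding uf_lim_right_translates[OF p B] Delta_def by blast
  moreover have "uf_lim G p (\<lambda>b. B #> inv b) \<subseteq> carrier G" by (auto simp: uf_lim_def)
  ultimately show ?thesis
    using finite_image_iff inj_on_subset[OF inj_on_uf_lmult[OF p]] by metis
qed

lemma uf_lim_eq_if_eventually_agrees:
  assumes p: "ultrafilter_on G p" and Y: "Y \<subseteq> carrier G"
    and agree: "\<And>x. x \<in> carrier G \<Longrightarrow> {g \<in> carrier G. agrees_on {x} (\<phi> g) Y} \<in> p"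
  shows "uf_lim G p \<phi> = Y"
proof (intro Set.set_eqI iffI)
  fix x assume "x \<in> uf_lim G p \<phi>"
  then have x: "x \<in> carrier G" "{g \<in> carrier G. x \<in> \<phi> g} \<in> p" by (auto simp: uf_lim_def)
  then have "{g \<in> carrier G. x \<in> \<phi> g} \<inter> {g \<in> carrier G. agrees_on {x} (\<phi> g) Y} \<noteq> {}"
    using agree ultrafilter_on_Int[OF p] ultrafilter_on_nonempty[OF p] by blast
  then show "x \<in> Y" by (auto simp: agrees_on_def)
next
  fix x assume "x \<in> Y"
  then have x: "x \<in> carrier G" using Y by blast
  have "{g \<in> carrier G. agrees_on {x} (\<phi> g) Y} \<subseteq> {g \<in> carrier G. x \<in> \<phi> g}"
    using \<open>x \<in> Y\<close> by (auto simp: agrees_on_def)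
  then have "{g \<in> carrier G. x \<in> \<phi> g} \<in> p"
    using ultrafilter_on_mono[OF p agree[OF x]] by blast
  then show "x \<in> uf_lim G p \<phi>" using x by (simp add: uf_lim_def)
qed

text \<open>If only finitely many \<open>s\<close> agreed with \<open>Y\<close> on \<open>K\<close>, adding to \<open>K\<close> a point of
  \<open>\<phi> s - Y\<close> for each of them would leave no \<open>s\<close> at all.\<close>

lemma infinitely_many_agree_with_finite_closure_point:
  assumes Y: "finite Y" "chi G Y \<in> PG G closure_of (chi G ` \<phi> ` S)"
    and \<phi>: "\<And>s. s \<in> S \<Longrightarrow> infinite (\<phi> s)" "\<And>s. s \<in> S \<Longrightarrow> \<phi> s \<subseteq> carrier G"
    and K: "finite K" "K \<subseteq> carrier G"
  shows "infinite {s \<in> S. agrees_on K (\<phi> s) Y}"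
proof
  define P where "P K = {s \<in> S. agrees_on K (\<phi> s) Y}" for K
  assume "finite (P K)"
  have "\<exists>k. k \<in> \<phi> s - Y" if "s \<in> S" for s
    using \<phi>(1)[OF that] Y(1) by (metis Diff_infinite_finite ex_in_conv finite.emptyI)
  then obtain k where k: "\<And>s. s \<in> S \<Longrightarrow> k s \<in> \<phi> s - Y" by metis
  define K' where "K' = K \<union> k ` P K"
  have "finite K'" "K' \<subseteq> carrier G"
    using K \<open>finite (P K)\<close> k \<phi>(2) by (auto simp: K'_def P_def)
  then obtain s where s: "s \<in> S" "agrees_on K' (\<phi> s) Y"
    using Y(2) unfolding chi_in_closure_of_iff by blast
  then have "s \<in> P K" by (auto simp: P_def K'_def agrees_on_def)
  then show False
    using s k[OF s(1)] by (auto simp: K'_def agrees_on_def)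
qed

lemma free_ultrafilter_on_eventually_agrees:
  assumes S: "S \<subseteq> carrier G"
    and inf: "\<And>K. finite K \<Longrightarrow> K \<subseteq> carrier G \<Longrightarrow> infinite {s \<in> S. agrees_on K (\<phi> s) Y}"
  obtains p where "free_ultrafilter_on G p" "S \<in> p"
    "\<forall>K. finite K \<and> K \<subseteq> carrier G \<longrightarrow> {s \<in> S. agrees_on K (\<phi> s) Y} \<in> p"
proof -
  define P where "P K = {s \<in> S. agrees_on K (\<phi> s) Y}" for K
  define Ks where "Ks = {K. finite K \<and> K \<subseteq> carrier G}"
  obtain p where p: "free_ultrafilter_on G p" "insert S (P ` Ks) \<subseteq> p"
  proof (rule free_ultrafilter_on_extends)
    show "insert S (P ` Ks) \<subseteq> Pow (carrier G)"
      unfolding P_def using S by blast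
    fix \<S> assume \<S>: "finite \<S>" "\<S> \<subseteq> insert S (P ` Ks)"
    have "finite (\<S> - {S})" using \<S>(1) by simp
    moreover have "\<S> - {S} \<subseteq> P ` Ks" using \<S>(2) by blast
    ultimately have "\<exists>\<K>\<subseteq>Ks. finite \<K> \<and> \<S> - {S} = P ` \<K>"
      by (rule finite_subset_image)
    then obtain \<K> where \<K>: "\<K> \<subseteq> Ks" "finite \<K>" "\<S> - {S} = P ` \<K>"
      by (elim exE conjE) (rule that)
    have "P (\<Union>\<K>) \<subseteq> carrier G \<inter> \<Inter>\<S>"
    proof
      fix s assume s: "s \<in> P (\<Union>\<K>)"
      have "s \<in> Q" if "Q \<in> \<S>" for Q
      proof (cases "Q = S")
        case False
        then have "Q \<in> P ` \<K>" using \<K>(3) that by blast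
        then obtain K where "K \<in> \<K>" "Q = P K" by blast
        then show ?thesis using s unfolding P_def agrees_on_def by blast
      qed (use s in \<open>simp add: P_def\<close>)
      moreover have "s \<in> carrier G" using s S unfolding P_def by blast
      ultimately show "s \<in> carrier G \<inter> \<Inter>\<S>" by blast
    qed
    moreover have "infinite (P (\<Union>\<K>))"
      unfolding P_def using \<K>(1,2) by (intro inf) (auto simp: Ks_def)
    ultimately show "infinite (carrier G \<inter> \<Inter>\<S>)" by (rule infinite_super)
  qed
  then show thesis
    by (intro that) (auto simp: P_def Ks_def)
qed

lemma (in group) finite_closure_point_if_scattered:
  assumes sc: "scattered G A" and B: "B \<subseteq> A" "B \<noteq> {}" and A: "A \<subseteq> carrier G"
  shows "\<exists>Y. finite Y \<and> Y \<subseteq> carrier G \<and> chi G Y \<in> PG G closure_of (chi G ` {B #> inv b | b. b \<in> B})"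
proof -
  have BC: "B \<subseteq> carrier G" using A B by blast
  have trans: "{B #> inv b | b. b \<in> B} = (\<lambda>b. B #> inv b) ` B" by blast
  show ?thesis
  proof (cases "finite B")
    case True
    from B obtain b where b: "b \<in> B" by blast
    have "chi G ` {B #> inv b | b. b \<in> B} \<subseteq> topspace (PG G)" using chi_in_topspace by blast
    then have "chi G (B #> inv b) \<in> PG G closure_of (chi G ` {B #> inv b | b. b \<in> B})"
      using closure_of_subset b by blast
    moreover have "inv b \<in> carrier G" using b BC by blast
    then have "finite (B #> inv b)" "B #> inv b \<subseteq> carrier G"
      using True finite_r_coset_iff[OF BC] r_coset_subset_G[OF BC] by auto
    ultimately show ?thesis by blast
  next
    case False
    then have "B \<subseteq> A \<and> infinite B" using B by blast
    then have "\<exists>p. free_ultrafilter_on G p \<and> B \<in> p \<and> finite (Delta G p B)"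
      using sc unfolding scattered_def by blast
    then obtain p where p: "free_ultrafilter_on G p" "B \<in> p" "finite (Delta G p B)" by blast
    then have uf: "ultrafilter_on G p" by (simp add: free_ultrafilter_on_def)
    have "uf_lim G p (\<lambda>b. B #> inv b) \<subseteq> carrier G" by (auto simp: uf_lim_def)
    then show ?thesis
      unfolding trans
      using finite_Delta_iff[OF uf BC] p(3) chi_uf_lim_in_closure_of[OF uf p(2)]
      by (intro exI[of _ "uf_lim G p (\<lambda>b. B #> inv b)"] conjI) simp_all
  qed
qed

lemma (in group) scattered_if_finite_closure_points:
  assumes H: "\<And>B. B \<subseteq> A \<Longrightarrow> B \<noteq> {} \<Longrightarrow>
    \<exists>Y. finite Y \<and> Y \<subseteq> carrier G \<and> chi G Y \<in> PG G closure_of (chi G ` {B #> inv b | b. b \<in> B})"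
    and A: "A \<subseteq> carrier G"
  shows "scattered G A"
  unfolding scattered_def
proof (intro allI impI)
  fix S assume S: "S \<subseteq> A \<and> infinite S"
  then have SC: "S \<subseteq> carrier G" using A by blast
  have "S \<noteq> {}" using S by auto
  then obtain Y where Y: "finite Y" "Y \<subseteq> carrier G"
    "chi G Y \<in> PG G closure_of (chi G ` {S #> inv s | s. s \<in> S})"
    using H S by blast
  have "{S #> inv s | s. s \<in> S} = (\<lambda>s. S #> inv s) ` S" by blast
  note Y = Y(1,2) Y(3)[unfolded this]
  have "infinite {s \<in> S. agrees_on K (S #> inv s) Y}" if "finite K" "K \<subseteq> carrier G" for K
  proof (rule infinitely_many_agree_with_finite_closure_point[OF Y(1,3) _ _ that])
    fix s assume "s \<in> S"
    then have "inv s \<in> carrier G" using SC by blast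
    then show "infinite (S #> inv s)" "S #> inv s \<subseteq> carrier G"
      using S finite_r_coset_iff[OF SC] r_coset_subset_G[OF SC] by auto
  qed
  then obtain p where p: "free_ultrafilter_on G p" "S \<in> p"
    and agree: "\<forall>K. finite K \<and> K \<subseteq> carrier G \<longrightarrow> {s \<in> S. agrees_on K (S #> inv s) Y} \<in> p"
    by (rule free_ultrafilter_on_eventually_agrees[OF SC])
  have uf: "ultrafilter_on G p" using p(1) by (simp add: free_ultrafilter_on_def)
  have "{g \<in> carrier G. agrees_on {x} (S #> inv g) Y} \<in> p" if "x \<in> carrier G" for x
    by (rule ultrafilter_on_mono[OF uf agree[rule_format, of "{x}"]]) (use that SC in auto)
  then have "uf_lim G p (\<lambda>s. S #> inv s) = Y"
    by (rule uf_lim_eq_if_eventually_agrees[OF uf Y(2)])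
  then have "finite (Delta G p S)"
    using finite_Delta_iff[OF uf SC] Y(1) by simp
  then show "\<exists>p. free_ultrafilter_on G p \<and> S \<in> p \<and> finite (Delta G p S)"
    using p by blast
qed

lemma (in group) scattered_iff_finite_closure_points:
  assumes A: "A \<subseteq> carrier G"
  shows "scattered G A \<longleftrightarrow>
    (\<forall>B. B \<subseteq> A \<and> B \<noteq> {} \<longrightarrow>
      (\<exists>Y. finite Y \<and> Y \<subseteq> carrier G \<and> chi G Y \<in> PG G closure_of (chi G ` {B #> inv b | b. b \<in> B})))"
proof (intro iffI allI impI)
  fix B assume "scattered G A" "B \<subseteq> A \<and> B \<noteq> {}"
  then show "\<exists>Y. finite Y \<and> Y \<subseteq> carrier G \<and> chi G Y \<in> PG G closure_of (chi G ` {B #> inv b | b. b \<in> B})"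
    using finite_closure_point_if_scattered[OF _ _ _ A] by blast
qed (use scattered_if_finite_closure_points[OF _ A] in blast)

theorem theorem4p2:
  fixes G :: "('a, 'b) monoid_scheme" and A :: "'a set"
  assumes "group G" and "infinite (carrier G)" and "A \<subseteq> carrier G"
  shows "(\<forall>n::nat. n_thin G n A \<longleftrightarrow> (\<forall>Y\<in>Wset G A. finite Y \<and> card Y \<le> n))
       \<and> (sparse G A \<longleftrightarrow> (\<forall>Y\<in>Wset G A. finite Y))
       \<and> (scattered G A \<longleftrightarrow>
            (\<forall>B. B \<subseteq> A \<and> B \<noteq> {} \<longrightarrow>
               (\<exists>Y. finite Y \<and> Y \<subseteq> carrier G \<and>
                  chi G Y \<in> (PG G) closure_of
                     (chi G ` {B #>\<^bsub>G\<^esub> inv\<^bsub>G\<^esub> b | b. b \<in> B}))))"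
proof -
  interpret group G by fact
  show ?thesis
    using n_thin_iff_Wset_card_le[OF assms(3)] sparse_iff_Wset_finite[OF assms(3)]
      scattered_iff_finite_closure_points[OF assms(3)] by simp
qed

end
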